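(* Let $X$ be a real random variable with density $p$, $\mathbb{E}X=0$, $\mathrm{Var}(X)=1$, $\mathbb{E}|X|^s<\infty$ for some $s>2$, and $\|p-\phi\|_\infty\le1/2$. Then there exists $C_1>0$ such that for every $\varepsilon>0$, \[ D(X)\le C_1(\mathbb{E}|X|^s)^{2/s}\Big(\sqrt{|\ln\|p-\phi\|_\infty|}\,\|p-\phi\|_\infty\Big)^{1-2/s}\le C_1M(\varepsilon)(\mathbb{E}|X|^s)^{2/s}\|p-\phi\|_\infty^{(1-2/s)(1-\varepsilon)}, \] where $M(\varepsilon):=\max_{x\in[0,1]}x^\varepsilon\sqrt{|\ln x|}+1<\infty$.
   Context: $\phi(x)=(2\pi)^{-1/2}e^{-x^2/2}$. $D(X)$ denotes the Kullback–Leibler divergence of $X$ from a Gaussian with the same mean and variance as $X$; here $D(X)=\int p\ln(p/\phi)$. $\|\cdot\|_\infty$ is the sup norm on $\mathbb{R}$. *)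

theory Defs
  imports "HOL-Probability.Probability"
begin

definition sup_norm :: "(real \<Rightarrow> real) \<Rightarrow> real" where
  "sup_norm f = (SUP x. \<bar>f x\<bar>)"

definition D_gauss :: "(real \<Rightarrow> real) \<Rightarrow> real" where
  "D_gauss p = (LINT x|lborel. p x * ln (p x / std_normal_density x))"

definition M_eps :: "real \<Rightarrow> real" where
  "M_eps \<epsilon> = (SUP x\<in>{0..1}. x powr \<epsilon> * sqrt \<bar>ln x\<bar>) + 1"

end

theory Submission
  imports Defs
begin

(* Put R = sqrt (2 |ln t|) with t = ||p - phi||_inf, so that phi is of size t at R.
   On [-R, R] the chi-square bound p ln (p/phi) - p + phi <= (p - phi)^2 / phi
   <= t^2 sqrt (2 pi) exp (x^2/2) <= t sqrt (2 pi) contributes O(t R).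
   On |x| > R, p <= 1 gives p ln (p/phi) <= p (ln sqrt (2 pi) + x^2/2); the tail masses of
   phi and of p are O(t R), and Hoelder's inequality with exponents s/2 and s/(s-2) bounds
   the tail second moment by a multiple of (E|X|^s)^(2/s) (t R)^(1-2/s).  The second inequality only
   uses that x^eps sqrt |ln x| is bounded on [0,1]. *)

lemma square_le_Young_powr:
  fixes s x \<mu> :: real
  assumes s: "s > 2" and \<mu>: "\<mu> > 0"
  shows "x\<^sup>2 \<le> (2/s) * (\<bar>x\<bar> powr s / \<mu>) + (1 - 2/s) * \<mu> powr (2/(s-2))"
proof (cases "x = 0")
  case True
  then show ?thesis using s \<mu> by simp
next
  case False
  have "(\<bar>x\<bar> powr s / \<mu>) powr (2/s) = x\<^sup>2 * \<mu> powr (-2/s)"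
    using s \<mu> False by (simp add: powr_divide powr_powr powr_minus divide_simps powr_numeral)
  moreover have "(\<mu> powr (2/(s-2))) powr (1 - 2/s) = \<mu> powr (2/s)"
  proof -
    have "2/(s-2) * (1 - 2/s) = 2/s" using s by (simp add: field_simps)
    then show ?thesis by (simp add: powr_powr)
  qed
  moreover have "\<mu> powr (-2/s) * \<mu> powr (2/s) = 1"
    using \<mu> by (simp flip: powr_add)
  ultimately have "x\<^sup>2 = (\<bar>x\<bar> powr s / \<mu>) powr (2/s) * (\<mu> powr (2/(s-2))) powr (1 - 2/s)"
    by (metis mult.assoc mult.right_neutral)
  also have "\<dots> \<le> (2/s) * (\<bar>x\<bar> powr s / \<mu>) + (1 - 2/s) * \<mu> powr (2/(s-2))"
    using s \<mu> False by (intro Youngs_inequality_0) auto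
  finally show ?thesis .
qed

lemma Young_powr_minimum:
  fixes s m Q :: real
  assumes s: "s > 2" and m: "m > 0" and Q: "Q > 0"
  obtains \<mu> where "\<mu> > 0"
    and "(2/s) * (m/\<mu>) + (1 - 2/s) * \<mu> powr (2/(s-2)) * Q = m powr (2/s) * Q powr (1 - 2/s)"
proof
  define \<mu> where "\<mu> = (m/Q) powr (1 - 2/s)"
  show "\<mu> > 0" unfolding \<mu>_def using m Q by simp
  have "m/\<mu> = m powr (2/s) * Q powr (1 - 2/s)"
    unfolding \<mu>_def using m Q
    by (simp add: powr_divide powr_diff divide_simps flip: powr_add)
  moreover have "\<mu> powr (2/(s-2)) * Q = m powr (2/s) * Q powr (1 - 2/s)"
  proof -
    have "(1 - 2/s) * (2/(s-2)) = 2/s" using s by (simp add: field_simps)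
    then have "\<mu> powr (2/(s-2)) = m powr (2/s) / Q powr (2/s)"
      unfolding \<mu>_def using m Q by (simp add: powr_powr powr_divide)
    then show ?thesis using Q by (simp add: powr_diff)
  qed
  ultimately show "(2/s) * (m/\<mu>) + (1 - 2/s) * \<mu> powr (2/(s-2)) * Q
      = m powr (2/s) * Q powr (1 - 2/s)"
    by (simp add: algebra_simps)
qed

lemma set_integral_square_le_Young:
  fixes p :: "real \<Rightarrow> real" and S :: "real set" and s \<mu> :: real
  assumes s: "s > 2" and \<mu>: "\<mu> > 0" and p0: "\<And>x. 0 \<le> p x" and S: "S \<in> sets borel"
    and p_int: "integrable lborel p"
    and sq_int: "integrable lborel (\<lambda>x. x\<^sup>2 * p x)"
    and s_int: "integrable lborel (\<lambda>x. \<bar>x\<bar> powr s * p x)"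
  shows "(LINT x|lborel. indicator S x * (x\<^sup>2 * p x))
    \<le> (2/s) * ((LINT x|lborel. \<bar>x\<bar> powr s * p x) / \<mu>)
      + (1 - 2/s) * \<mu> powr (2/(s-2)) * (LINT x|lborel. indicator S x * p x)"
proof -
  have S_lborel: "S \<in> sets lborel" using S by simp
  have pointwise: "indicator S x * (x\<^sup>2 * p x)
      \<le> (2/s/\<mu>) * (\<bar>x\<bar> powr s * p x) + ((1 - 2/s) * \<mu> powr (2/(s-2))) * (indicator S x * p x)"
    for x
  proof (cases "x \<in> S")
    case True
    have "x\<^sup>2 * p x \<le> ((2/s) * (\<bar>x\<bar> powr s / \<mu>) + (1 - 2/s) * \<mu> powr (2/(s-2))) * p x"
      using square_le_Young_powr[OF s \<mu>] p0 by (rule mult_right_mono)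
    then show ?thesis using True by (simp add: algebra_simps)
  next
    case False
    then show ?thesis using p0[of x] s \<mu> by simp
  qed
  have "(LINT x|lborel. indicator S x * (x\<^sup>2 * p x))
      \<le> (LINT x|lborel. (2/s/\<mu>) * (\<bar>x\<bar> powr s * p x)
            + ((1 - 2/s) * \<mu> powr (2/(s-2))) * (indicator S x * p x))"
    using integrable_mult_indicator[OF S_lborel sq_int] integrable_mult_indicator[OF S_lborel p_int]
    by (intro integral_mono pointwise Bochner_Integration.integrable_add integrable_mult_right s_int)
      simp_all
  also have "\<dots> = (2/s) * ((LINT x|lborel. \<bar>x\<bar> powr s * p x) / \<mu>)
      + (1 - 2/s) * \<mu> powr (2/(s-2)) * (LINT x|lborel. indicator S x * p x)"
    using s_int integrable_mult_indicator[OF S_lborel p_int] by simp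
  finally show ?thesis .
qed

lemma set_integral_square_le_Holder:
  fixes p :: "real \<Rightarrow> real" and S :: "real set" and s Q :: real
  assumes s: "s > 2" and p0: "\<And>x. 0 \<le> p x" and S: "S \<in> sets borel"
    and p_int: "integrable lborel p"
    and sq_int: "integrable lborel (\<lambda>x. x\<^sup>2 * p x)"
    and s_int: "integrable lborel (\<lambda>x. \<bar>x\<bar> powr s * p x)"
    and m_pos: "(LINT x|lborel. \<bar>x\<bar> powr s * p x) > 0"
    and Q: "Q > 0" "(LINT x|lborel. indicator S x * p x) \<le> Q"
  shows "(LINT x|lborel. indicator S x * (x\<^sup>2 * p x))
    \<le> (LINT x|lborel. \<bar>x\<bar> powr s * p x) powr (2/s) * Q powr (1 - 2/s)"
proof -
  define m where "m = (LINT x|lborel. \<bar>x\<bar> powr s * p x)"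
  obtain \<mu> where \<mu>: "\<mu> > 0"
    and opt: "(2/s) * (m/\<mu>) + (1 - 2/s) * \<mu> powr (2/(s-2)) * Q = m powr (2/s) * Q powr (1 - 2/s)"
    using Young_powr_minimum[OF s _ Q(1)] m_pos unfolding m_def by blast
  have "(LINT x|lborel. indicator S x * (x\<^sup>2 * p x))
      \<le> (2/s) * (m/\<mu>) + (1 - 2/s) * \<mu> powr (2/(s-2)) * (LINT x|lborel. indicator S x * p x)"
    unfolding m_def by (rule set_integral_square_le_Young[OF s \<mu> p0 S p_int sq_int s_int])
  also have "\<dots> \<le> (2/s) * (m/\<mu>) + (1 - 2/s) * \<mu> powr (2/(s-2)) * Q"
    using s Q(2) by (intro add_left_mono mult_left_mono) auto
  also note opt
  finally show ?thesis unfolding m_def .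
qed

lemma abs_moment_ge_one:
  fixes p :: "real \<Rightarrow> real" and s :: real
  assumes s: "s > 2" and p0: "\<And>x. 0 \<le> p x"
    and p_int: "integrable lborel p" and p1: "(LINT x|lborel. p x) = 1"
    and sq_int: "integrable lborel (\<lambda>x. x\<^sup>2 * p x)" and sq1: "(LINT x|lborel. x\<^sup>2 * p x) = 1"
    and s_int: "integrable lborel (\<lambda>x. \<bar>x\<bar> powr s * p x)"
  shows "1 \<le> (LINT x|lborel. \<bar>x\<bar> powr s * p x)"
proof -
  have "1 \<le> (2/s) * (LINT x|lborel. \<bar>x\<bar> powr s * p x) + (1 - 2/s)"
    using set_integral_square_le_Young[OF s zero_less_one p0 sets.top p_int sq_int s_int]
    by (simp add: p1 sq1)
  then show ?thesis using s by (simp add: field_simps)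
qed

lemma sqrt_2pi_bounds: "2 \<le> sqrt (2 * pi)" "sqrt (2 * pi) \<le> 3"
proof -
  have "sqrt 4 \<le> sqrt (2 * pi)" using pi_gt3 by (intro real_sqrt_le_mono) simp
  then show "2 \<le> sqrt (2 * pi)" by simp
  have "sqrt (2 * pi) \<le> sqrt 9" using pi_less_4 by (intro real_sqrt_le_mono) simp
  also have "sqrt 9 = (3::real)" by (simp add: real_sqrt_unique)
  finally show "sqrt (2 * pi) \<le> 3" .
qed

lemma std_normal_density_le_half: "std_normal_density x \<le> 1/2"
proof -
  have "std_normal_density x \<le> 1 / sqrt (2 * pi)"
    unfolding std_normal_density_def by (intro mult_left_le) auto
  also have "\<dots> \<le> 1/2" using sqrt_2pi_bounds by (simp add: divide_simps)
  finally show ?thesis .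
qed

lemma ln_std_normal_density: "ln (std_normal_density x) = - ln (sqrt (2 * pi)) - x\<^sup>2 / 2"
  unfolding std_normal_density_def by (simp add: ln_div)

lemma inverse_std_normal_density: "1 / std_normal_density x = sqrt (2 * pi) * exp (x\<^sup>2 / 2)"
  unfolding std_normal_density_def by (simp add: exp_minus field_simps)

lemma std_normal_tail_le:
  fixes R :: real
  assumes R: "1 \<le> R"
  shows "(LINT x|lborel. indicator {x. R < \<bar>x\<bar>} x * std_normal_density x)
    \<le> exp (1/2) * R * exp (- R\<^sup>2 / 2)"
proof -
  define c where "c = exp (1/2) * R * exp (- R\<^sup>2 / 2)"
  have pointwise: "indicator {x. R < \<bar>x\<bar>} x * std_normal_density x \<le> c * normal_density 0 R x"
    for x
  proof (cases "R < \<bar>x\<bar>")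
    case True
    have "R\<^sup>2 \<le> x\<^sup>2" using True R by (simp add: abs_le_square_iff[symmetric])
    then have "(R\<^sup>2 - 1) * (x\<^sup>2 - R\<^sup>2) \<ge> 0" using R by (simp add: one_le_power)
    then have "- x\<^sup>2 / 2 \<le> 1/2 - R\<^sup>2 / 2 - x\<^sup>2 / (2 * R\<^sup>2)"
      using R by (simp add: field_simps)
    then have "std_normal_density x \<le> exp (1/2 - R\<^sup>2 / 2 - x\<^sup>2 / (2 * R\<^sup>2)) / sqrt (2 * pi)"
      unfolding std_normal_density_def by (simp add: divide_right_mono)
    also have "exp (1/2 - R\<^sup>2 / 2 - x\<^sup>2 / (2 * R\<^sup>2))
        = exp (1/2) * exp (- R\<^sup>2 / 2) * exp (- x\<^sup>2 / (2 * R\<^sup>2))"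
      by (simp flip: exp_add)
    also have "\<dots> / sqrt (2 * pi) = c * normal_density 0 R x"
      unfolding c_def normal_density_def using R by (simp add: real_sqrt_mult field_simps)
    finally show ?thesis using True by simp
  next
    case False
    then show ?thesis unfolding c_def using R by simp
  qed
  have "{x. R < \<bar>x\<bar>} \<in> sets lborel" by simp
  then have "(LINT x|lborel. indicator {x. R < \<bar>x\<bar>} x * std_normal_density x)
      \<le> (LINT x|lborel. c * normal_density 0 R x)"
    using R by (intro integral_mono pointwise integrable_mult_right)
      (auto intro: integrable_mult_indicator[where 'b=real, simplified])
  also have "\<dots> = c" using R by simp
  finally show ?thesis unfolding c_def .
qed

lemma mult_ln_div_le_chi_square:
  fixes P F :: real
  assumes P: "0 \<le> P" and F: "0 < F"
  shows "P * ln (P / F) - P + F \<le> (P - F)\<^sup>2 / F"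
proof (cases "P = 0")
  case True
  then show ?thesis using F by (simp add: power2_eq_square)
next
  case False
  then have "P * ln (P / F) \<le> P * (P / F - 1)"
    using P F by (intro mult_left_mono ln_le_minus_one) auto
  also have "P * (P / F - 1) = (P - F)\<^sup>2 / F + P - F"
    using F by (simp add: field_simps power2_eq_square)
  finally show ?thesis by simp
qed

lemma mult_ln_div_std_normal_le:
  fixes P x :: real
  assumes "0 \<le> P" "P \<le> 1"
  shows "P * ln (P / std_normal_density x) \<le> P * (ln (sqrt (2 * pi)) + x\<^sup>2 / 2)"
proof (cases "P = 0")
  case False
  have "0 < std_normal_density x" by (simp add: normal_density_pos)
  moreover have "ln P \<le> 0" using assms False by simp
  ultimately have "ln (P / std_normal_density x) \<le> ln (sqrt (2 * pi)) + x\<^sup>2 / 2"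
    using assms False by (simp add: ln_div ln_std_normal_density)
  then show ?thesis using assms by (intro mult_left_mono)
qed simp

lemma D_gauss_le_integral:
  fixes p h :: "real \<Rightarrow> real"
  assumes p_int: "integrable lborel p" and p1: "(LINT x|lborel. p x) = 1"
    and h_int: "integrable lborel h" and h0: "\<And>x. 0 \<le> h x"
    and le_h: "\<And>x. p x * ln (p x / std_normal_density x) - p x + std_normal_density x \<le> h x"
  shows "D_gauss p \<le> (LINT x|lborel. h x)"
proof (cases "integrable lborel (\<lambda>x. p x * ln (p x / std_normal_density x))")
  case True
  have "D_gauss p
      = (LINT x|lborel. p x * ln (p x / std_normal_density x) - p x + std_normal_density x)"
    unfolding D_gauss_def using True p_int p1 by simp
  also have "\<dots> \<le> (LINT x|lborel. h x)"
    using True p_int by (intro integral_mono le_h h_int) auto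
  finally show ?thesis .
next
  case False
  then show ?thesis unfolding D_gauss_def
    using h0 by (simp add: not_integrable_integral_eq integral_nonneg_AE)
qed

locale density_near_std_normal =
  fixes p :: "real \<Rightarrow> real" and t :: real
  assumes nonneg: "\<And>x. 0 \<le> p x"
    and integrable: "integrable lborel p" and integral_eq_1: "(LINT x|lborel. p x) = 1"
    and sq_integrable: "integrable lborel (\<lambda>x. x\<^sup>2 * p x)"
    and sq_integral_eq_1: "(LINT x|lborel. x\<^sup>2 * p x) = 1"
    and t_pos: "0 < t" and t_le_half: "t \<le> 1/2"
    and close: "\<And>x. \<bar>p x - std_normal_density x\<bar> \<le> t"
begin

definition radius :: real where "radius = sqrt (2 * \<bar>ln t\<bar>)"

definition tail :: "real set" where "tail = {x. radius < \<bar>x\<bar>}"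

lemma abs_ln_t_ge_half: "1/2 \<le> \<bar>ln t\<bar>"
proof -
  have "ln (exp (1/2)) \<le> ln (2::real)" using exp_half_le2 by (subst ln_le_cancel_iff) auto
  moreover have "ln t \<le> ln (1/2)" using t_pos t_le_half by simp
  ultimately show ?thesis by (simp add: ln_div)
qed

lemma radius_ge_1: "1 \<le> radius"
  unfolding radius_def using abs_ln_t_ge_half by simp

lemma radius_sq: "radius\<^sup>2 / 2 = - ln t"
proof -
  have "ln t \<le> 0" using t_pos t_le_half by simp
  then show ?thesis unfolding radius_def by simp
qed

lemma exp_neg_radius_sq: "exp (- radius\<^sup>2 / 2) = t"
  using radius_sq t_pos by simp

lemma exp_radius_sq: "exp (radius\<^sup>2 / 2) = 1 / t"
  using radius_sq t_pos by (simp add: exp_minus inverse_eq_divide)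

lemma t_radius_eq: "t * radius = sqrt 2 * (sqrt \<bar>ln t\<bar> * t)"
  unfolding radius_def by (simp add: real_sqrt_mult)

lemma t_radius_le_1: "t * radius \<le> 1"
proof -
  have "- ln t \<le> 1/t - 1" using t_pos ln_le_minus_one[of "1/t"] by (simp add: ln_div)
  then have "t * \<bar>ln t\<bar> \<le> 1" using t_pos t_le_half by (simp add: field_simps)
  then have "2 * t * (t * \<bar>ln t\<bar>) \<le> 2 * t" using t_pos by (simp add: mult_left_le)
  moreover have "(t * radius)\<^sup>2 = 2 * t * (t * \<bar>ln t\<bar>)"
    unfolding radius_def by (simp add: power_mult_distrib power2_eq_square)
  ultimately have "(t * radius)\<^sup>2 \<le> 2 * t" by simp
  also have "\<dots> \<le> 1" using t_le_half by simp
  finally show ?thesis using t_pos radius_ge_1 by (simp add: abs_square_le_1)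
qed

lemma p_le_1: "p x \<le> 1"
  using close[of x] std_normal_density_le_half[of x] t_le_half by linarith

lemma tail_sets[measurable]: "tail \<in> sets borel"
  unfolding tail_def by measurable

lemma integrable_tail:
  "integrable lborel f \<Longrightarrow> integrable lborel (\<lambda>x. indicator tail x * f x :: real)"
  using integrable_mult_indicator[of tail lborel f] by simp

lemma indicator_tail: "indicator tail x = 1 - (indicator {-radius..radius} x :: real)"
  by (auto simp: indicator_def tail_def)

lemma std_normal_tail_mass_le: "(LINT x|lborel. indicator tail x * std_normal_density x) \<le> 2 * t * radius"
proof -
  have "(LINT x|lborel. indicator tail x * std_normal_density x)
      \<le> exp (1/2) * radius * exp (- radius\<^sup>2 / 2)"
    unfolding tail_def by (rule std_normal_tail_le[OF radius_ge_1])
  also have "\<dots> \<le> 2 * t * radius"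
    unfolding exp_neg_radius_sq using exp_half_le2 t_pos radius_ge_1
    by (simp add: mult.commute mult.left_commute mult_right_mono)
  finally show ?thesis .
qed

lemma core_integrable: "integrable lborel (indicator {-radius..radius} :: real \<Rightarrow> real)"
  by (simp add: integrable_indicator_iff emeasure_lborel_Icc_eq)

lemma core_integral: "(LINT x|lborel. indicator {-radius..radius} x) = 2 * radius"
  using radius_ge_1 by (simp add: measure_lborel_Icc)

lemma tail_mass_le: "(LINT x|lborel. indicator tail x * p x) \<le> 4 * t * radius"
proof -
  have tail_phi_int: "integrable lborel (\<lambda>x. indicator tail x * std_normal_density x)"
    by (simp add: integrable_tail)
  have pointwise: "indicator tail x * p x
      \<le> (p x - std_normal_density x) + indicator tail x * std_normal_density x
        + t * indicator {-radius..radius} x" for x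
    using close[of x] by (cases "x \<in> {-radius..radius}") (auto simp: indicator_tail)
  have "(LINT x|lborel. indicator tail x * p x)
      \<le> (LINT x|lborel. (p x - std_normal_density x) + indicator tail x * std_normal_density x
            + t * indicator {-radius..radius} x)"
    by (intro integral_mono pointwise Bochner_Integration.integrable_add
        Bochner_Integration.integrable_diff integrable tail_phi_int integrable_mult_right
        core_integrable integrable_tail) auto
  also have "\<dots> = (LINT x|lborel. indicator tail x * std_normal_density x) + t * (2 * radius)"
    using integrable integral_eq_1 tail_phi_int core_integrable core_integral by simp
  also have "\<dots> \<le> 4 * t * radius" using std_normal_tail_mass_le by simp
  finally show ?thesis .
qed

definition KL_majorant :: "real \<Rightarrow> real" where
  "KL_majorant x = t * sqrt (2 * pi) * indicator {-radius..radius} x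
    + indicator tail x * (x\<^sup>2 * p x) / 2 + ln (sqrt (2 * pi)) * (indicator tail x * p x)
    + indicator tail x * std_normal_density x"

lemma KL_integrand_le_majorant:
  "p x * ln (p x / std_normal_density x) - p x + std_normal_density x \<le> KL_majorant x"
proof (cases "x \<in> tail")
  case False
  then have x: "\<bar>x\<bar> \<le> radius" unfolding tail_def by simp
  have phi: "0 < std_normal_density x" by (simp add: normal_density_pos)
  have "x\<^sup>2 \<le> radius\<^sup>2" using power_mono[OF x abs_ge_zero, of 2] by simp
  then have exp_le: "exp (x\<^sup>2 / 2) \<le> 1 / t" unfolding exp_radius_sq[symmetric] by simp
  have "p x * ln (p x / std_normal_density x) - p x + std_normal_density x
      \<le> (p x - std_normal_density x)\<^sup>2 * (1 / std_normal_density x)"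
    using mult_ln_div_le_chi_square[OF nonneg phi] by simp
  also have "\<dots> \<le> t\<^sup>2 * (sqrt (2 * pi) * exp (x\<^sup>2 / 2))"
    unfolding inverse_std_normal_density using close[of x] t_pos
    by (intro mult_right_mono) (simp_all add: abs_le_square_iff[symmetric])
  also have "\<dots> \<le> t\<^sup>2 * (sqrt (2 * pi) * (1 / t))"
    using exp_le by (intro mult_left_mono) auto
  also have "\<dots> = t * sqrt (2 * pi)" using t_pos by (simp add: power2_eq_square)
  also have "\<dots> = KL_majorant x" unfolding KL_majorant_def using False x by (simp add: abs_le_iff)
  finally show ?thesis .
next
  case True
  have "p x * ln (p x / std_normal_density x) \<le> p x * (ln (sqrt (2 * pi)) + x\<^sup>2 / 2)"
    by (rule mult_ln_div_std_normal_le[OF nonneg p_le_1])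
  moreover have "x \<notin> {-radius..radius}" using True by (auto simp: tail_def)
  then have "KL_majorant x = x\<^sup>2 * p x / 2 + ln (sqrt (2 * pi)) * p x + std_normal_density x"
    unfolding KL_majorant_def using True by simp
  ultimately show ?thesis using nonneg[of x] by (simp add: algebra_simps)
qed

lemma KL_majorant_integrable: "integrable lborel KL_majorant"
  unfolding KL_majorant_def
  by (intro Bochner_Integration.integrable_add integrable_mult_right integrable_divide
      core_integrable integrable_tail integrable sq_integrable integrable_normal_density) simp

lemma KL_majorant_nonneg: "0 \<le> KL_majorant x"
  unfolding KL_majorant_def using t_pos nonneg[of x] pi_gt3
  by (intro add_nonneg_nonneg mult_nonneg_nonneg) auto

lemma D_gauss_le_tail_moment:
  "D_gauss p \<le> 16 * t * radius + (LINT x|lborel. indicator tail x * (x\<^sup>2 * p x)) / 2"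
proof -
  define T where "T = (LINT x|lborel. indicator tail x * (x\<^sup>2 * p x))"
  define PX where "PX = (LINT x|lborel. indicator tail x * p x)"
  define PZ where "PZ = (LINT x|lborel. indicator tail x * std_normal_density x)"
  have c0: "0 \<le> ln (sqrt (2 * pi))" "ln (sqrt (2 * pi)) \<le> 2"
    using sqrt_2pi_bounds pi_gt3 ln_le_minus_one[of "sqrt (2 * pi)"] by auto
  have PX0: "0 \<le> PX" unfolding PX_def using nonneg by (intro integral_nonneg_AE) auto
  have "D_gauss p \<le> (LINT x|lborel. KL_majorant x)"
    by (intro D_gauss_le_integral integrable integral_eq_1 KL_majorant_integrable
        KL_majorant_nonneg KL_integrand_le_majorant)
  also have "\<dots> = t * sqrt (2 * pi) * (2 * radius) + T / 2 + ln (sqrt (2 * pi)) * PX + PZ"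
    unfolding KL_majorant_def T_def PX_def PZ_def
    using integrable_tail[OF sq_integrable] integrable_tail[OF integrable]
      integrable_tail[OF integrable_normal_density] core_integrable core_integral
    by (simp add: Bochner_Integration.integral_add integrable_mult_right integrable_divide)
  also have "\<dots> \<le> 6 * t * radius + T / 2 + 2 * (4 * t * radius) + 2 * t * radius"
  proof -
    have "t * sqrt (2 * pi) * (2 * radius) \<le> t * 3 * (2 * radius)"
      using sqrt_2pi_bounds t_pos radius_ge_1 by (intro mult_right_mono mult_left_mono) auto
    then have "t * sqrt (2 * pi) * (2 * radius) \<le> 6 * t * radius" by simp
    moreover have "ln (sqrt (2 * pi)) * PX \<le> 2 * (4 * t * radius)"
      using c0 PX0 tail_mass_le unfolding PX_def by (intro mult_mono) auto
    ultimately show ?thesis using std_normal_tail_mass_le unfolding PZ_def by linarith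
  qed
  finally show ?thesis unfolding T_def by simp
qed

lemma D_gauss_le_abs_moment_radius:
  fixes s :: real
  assumes s: "s > 2" and s_int: "integrable lborel (\<lambda>x. \<bar>x\<bar> powr s * p x)"
  shows "D_gauss p
    \<le> 18 * (LINT x|lborel. \<bar>x\<bar> powr s * p x) powr (2/s) * (t * radius) powr (1 - 2/s)"
proof -
  define m where "m = (LINT x|lborel. \<bar>x\<bar> powr s * p x)"
  define K where "K = t * radius"
  define a where "a = 1 - 2/s"
  have a: "0 < a" "a \<le> 1" unfolding a_def using s by auto
  have K: "0 < K" "K \<le> 1" unfolding K_def using t_pos radius_ge_1 t_radius_le_1 by auto
  have m: "1 \<le> m" unfolding m_def
    by (rule abs_moment_ge_one[OF s nonneg integrable integral_eq_1 sq_integrable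
          sq_integral_eq_1 s_int])
  then have m': "1 \<le> m powr (2/s)" using s by (intro ge_one_powr_ge_zero) auto
  have "(LINT x|lborel. indicator tail x * (x\<^sup>2 * p x)) \<le> m powr (2/s) * (4 * K) powr a"
    unfolding m_def a_def using m tail_mass_le K
    by (intro set_integral_square_le_Holder[OF s nonneg tail_sets integrable sq_integrable s_int])
      (auto simp: m_def K_def)
  also have "\<dots> \<le> m powr (2/s) * (4 * K powr a)"
  proof -
    have "4 powr a \<le> 4 powr 1" using a by (intro powr_mono) auto
    then have "(4 * K) powr a \<le> 4 * K powr a" using K by (simp add: powr_mult)
    then show ?thesis using m' by (intro mult_left_mono) auto
  qed
  finally have "D_gauss p \<le> 16 * K + 2 * m powr (2/s) * K powr a"
    using D_gauss_le_tail_moment unfolding K_def by simp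
  also have "\<dots> \<le> 16 * m powr (2/s) * K powr a + 2 * m powr (2/s) * K powr a"
  proof -
    have "K \<le> K powr a" using powr_mono'[of a 1 K] a K by simp
    also have "\<dots> \<le> m powr (2/s) * K powr a" using m' by (simp add: mult_le_cancel_right1)
    finally show ?thesis by (simp add: mult.commute)
  qed
  finally show ?thesis unfolding m_def K_def a_def by (simp add: ac_simps)
qed

lemma D_gauss_le_abs_moment:
  fixes s :: real
  assumes s: "s > 2" and s_int: "integrable lborel (\<lambda>x. \<bar>x\<bar> powr s * p x)"
  shows "D_gauss p \<le> 36 * (LINT x|lborel. \<bar>x\<bar> powr s * p x) powr (2/s)
    * (sqrt \<bar>ln t\<bar> * t) powr (1 - 2/s)"
proof -
  define a where "a = 1 - 2/s"
  have a: "0 < a" "a \<le> 1" unfolding a_def using s by auto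
  have "sqrt 2 powr a \<le> sqrt 2 powr 1" using a by (intro powr_mono) auto
  also have "\<dots> \<le> 2" using real_sqrt_le_mono[of 2 4] by simp
  finally have "(t * radius) powr a \<le> 2 * (sqrt \<bar>ln t\<bar> * t) powr a"
    unfolding t_radius_eq using t_pos by (simp add: powr_mult mult_right_mono)
  then have "18 * (LINT x|lborel. \<bar>x\<bar> powr s * p x) powr (2/s) * (t * radius) powr a
      \<le> 18 * (LINT x|lborel. \<bar>x\<bar> powr s * p x) powr (2/s) * (2 * (sqrt \<bar>ln t\<bar> * t) powr a)"
    by (intro mult_left_mono) auto
  then show ?thesis
    using D_gauss_le_abs_moment_radius[OF s s_int] unfolding a_def by linarith
qed

end

lemma powr_sqrt_abs_ln_le:
  fixes \<epsilon> x :: real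
  assumes \<epsilon>: "\<epsilon> > 0" and x: "0 \<le> x" "x \<le> 1"
  shows "x powr \<epsilon> * sqrt \<bar>ln x\<bar> \<le> 1 + 1/\<epsilon>"
proof (cases "x = 0")
  case True
  then show ?thesis using \<epsilon> by simp
next
  case False
  define u where "u = x powr \<epsilon>"
  have u: "0 < u" "u \<le> 1" unfolding u_def using x False \<epsilon> by (auto intro: powr_le1)
  have "- ln u \<le> 1/u" using u ln_le_minus_one[of "1/u"] by (simp add: ln_div)
  moreover have "ln u = \<epsilon> * ln x" unfolding u_def using x False by (simp add: ln_powr)
  moreover have "ln x \<le> 0" using x False by simp
  ultimately have "\<bar>ln x\<bar> \<le> 1 / (u * \<epsilon>)" using \<epsilon> u by (simp add: field_simps)
  then have "(u * sqrt \<bar>ln x\<bar>)\<^sup>2 \<le> u\<^sup>2 * (1 / (u * \<epsilon>))"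
    unfolding power_mult_distrib by (intro mult_left_mono) simp_all
  also have "\<dots> \<le> 1/\<epsilon>" using u \<epsilon> by (simp add: power2_eq_square divide_right_mono)
  finally have sq: "(u * sqrt \<bar>ln x\<bar>)\<^sup>2 \<le> 1/\<epsilon>" .
  have "u * sqrt \<bar>ln x\<bar> \<le> 1 + 1/\<epsilon>"
  proof (cases "u * sqrt \<bar>ln x\<bar> \<le> 1")
    case True
    moreover have "0 < 1/\<epsilon>" using \<epsilon> by simp
    ultimately show ?thesis by linarith
  next
    case False
    then have "u * sqrt \<bar>ln x\<bar> \<le> (u * sqrt \<bar>ln x\<bar>)\<^sup>2"
      by (simp add: power2_eq_square mult_le_cancel_left1)
    then show ?thesis using sq by simp
  qed
  then show ?thesis unfolding u_def .
qed

lemma powr_sqrt_abs_ln_le_M_eps: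
  fixes \<epsilon> x :: real
  assumes "\<epsilon> > 0" "0 \<le> x" "x \<le> 1"
  shows "x powr \<epsilon> * sqrt \<bar>ln x\<bar> \<le> M_eps \<epsilon> - 1"
proof -
  have "bdd_above ((\<lambda>x. x powr \<epsilon> * sqrt \<bar>ln x\<bar>) ` {0..1})"
    using powr_sqrt_abs_ln_le[OF assms(1)] by (intro bdd_aboveI2[where M="1 + 1/\<epsilon>"]) auto
  then have "x powr \<epsilon> * sqrt \<bar>ln x\<bar> \<le> (SUP x\<in>{0..1}. x powr \<epsilon> * sqrt \<bar>ln x\<bar>)"
    using assms by (intro cSUP_upper) auto
  then show ?thesis unfolding M_eps_def by simp
qed

lemma sqrt_abs_ln_mult_powr_le:
  fixes \<epsilon> a t :: real
  assumes \<epsilon>: "\<epsilon> > 0" and a: "0 < a" "a \<le> 1" and t: "0 \<le> t" "t \<le> 1"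
  shows "(sqrt \<bar>ln t\<bar> * t) powr a \<le> M_eps \<epsilon> * t powr (a * (1 - \<epsilon>))"
proof (cases "t = 0")
  case False
  define v where "v = t powr \<epsilon> * sqrt \<bar>ln t\<bar>"
  have v: "0 \<le> v" "v \<le> M_eps \<epsilon> - 1"
    unfolding v_def using powr_sqrt_abs_ln_le_M_eps[OF \<epsilon> t] by auto
  have "v powr a \<le> max 1 v"
    using v a by (cases "v \<le> 1") (auto intro: powr_le1 order.trans[OF powr_mono[of a 1]])
  then have va: "v powr a \<le> M_eps \<epsilon>" using v by simp
  have "sqrt \<bar>ln t\<bar> * t = v * t powr (1 - \<epsilon>)"
    unfolding v_def using t False by (simp add: powr_diff field_simps)
  then have "(sqrt \<bar>ln t\<bar> * t) powr a = v powr a * t powr (a * (1 - \<epsilon>))"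
    using v t by (simp add: powr_mult powr_powr mult.commute)
  also have "\<dots> \<le> M_eps \<epsilon> * t powr (a * (1 - \<epsilon>))"
    using va by (intro mult_right_mono) auto
  finally show ?thesis .
qed simp

lemma sup_norm_bounds:
  fixes f :: "real \<Rightarrow> real"
  assumes "\<And>x. \<bar>f x\<bar> \<le> c"
  shows "\<And>x. \<bar>f x\<bar> \<le> sup_norm f" and "0 \<le> sup_norm f" and "sup_norm f \<le> c"
proof -
  show le_sup: "\<bar>f x\<bar> \<le> sup_norm f" for x
    unfolding sup_norm_def using assms by (intro cSUP_upper bdd_aboveI2) auto
  show "0 \<le> sup_norm f" using le_sup[of 0] by linarith
  show "sup_norm f \<le> c" unfolding sup_norm_def using assms by (intro cSUP_least) auto
qed

lemma D_gauss_std_normal_density: "D_gauss std_normal_density = 0"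
  unfolding D_gauss_def by (simp add: normal_density_pos less_imp_neq[symmetric])

lemma D_gauss_le_sup_norm:
  fixes p :: "real \<Rightarrow> real" and s :: real
  defines "t \<equiv> sup_norm (\<lambda>x. p x - std_normal_density x)"
  assumes s: "s > 2" and nonneg: "\<And>x. 0 \<le> p x"
    and integrable: "integrable lborel p" and integral_eq_1: "(LINT x|lborel. p x) = 1"
    and sq_integrable: "integrable lborel (\<lambda>x. x\<^sup>2 * p x)"
    and sq_integral_eq_1: "(LINT x|lborel. x\<^sup>2 * p x) = 1"
    and s_int: "integrable lborel (\<lambda>x. \<bar>x\<bar> powr s * p x)"
    and close: "\<And>x. \<bar>p x - std_normal_density x\<bar> \<le> 1/2"
  shows "D_gauss p \<le> 36 * (LINT x|lborel. \<bar>x\<bar> powr s * p x) powr (2/s)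
    * (sqrt \<bar>ln t\<bar> * t) powr (1 - 2/s)"
proof -
  note t = sup_norm_bounds[where f="\<lambda>x. p x - std_normal_density x", OF close, folded t_def]
  show ?thesis
  proof (cases "t = 0")
    case True
    then have "p = std_normal_density" using t(1) by force
    then show ?thesis using True by (simp add: D_gauss_std_normal_density)
  next
    case False
    interpret density_near_std_normal p t
      using False t by unfold_locales (simp_all add: assms)
    show ?thesis by (rule D_gauss_le_abs_moment[OF s s_int])
  qed
qed

theorem corollary2p6:
  fixes s :: real
  assumes "s > 2"
  shows "\<exists>C1>0. \<forall>p :: real \<Rightarrow> real.
     ((\<forall>x. 0 \<le> p x) \<and> p \<in> borel_measurable borel \<and>
      integrable lborel p \<and> (LINT x|lborel. p x) = 1 \<and>
      integrable lborel (\<lambda>x. x * p x) \<and> (LINT x|lborel. x * p x) = 0 \<and>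
      integrable lborel (\<lambda>x. x\<^sup>2 * p x) \<and> (LINT x|lborel. x\<^sup>2 * p x) = 1 \<and>
      integrable lborel (\<lambda>x. \<bar>x\<bar> powr s * p x) \<and>
      (\<forall>x. \<bar>p x - std_normal_density x\<bar> \<le> 1/2))
     \<longrightarrow> (\<forall>\<epsilon>>0.
       (let m = (LINT x|lborel. \<bar>x\<bar> powr s * p x);
            t = sup_norm (\<lambda>x. p x - std_normal_density x)
        in D_gauss p \<le> C1 * m powr (2/s) * (sqrt \<bar>ln t\<bar> * t) powr (1 - 2/s)
         \<and> C1 * m powr (2/s) * (sqrt \<bar>ln t\<bar> * t) powr (1 - 2/s)
             \<le> C1 * M_eps \<epsilon> * m powr (2/s) * t powr ((1 - 2/s) * (1 - \<epsilon>))))"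
proof (intro exI[of _ 36] conjI allI impI)
  fix p :: "real \<Rightarrow> real" and \<epsilon> :: real
  assume hyps: "(\<forall>x. 0 \<le> p x) \<and> p \<in> borel_measurable borel \<and>
      integrable lborel p \<and> (LINT x|lborel. p x) = 1 \<and>
      integrable lborel (\<lambda>x. x * p x) \<and> (LINT x|lborel. x * p x) = 0 \<and>
      integrable lborel (\<lambda>x. x\<^sup>2 * p x) \<and> (LINT x|lborel. x\<^sup>2 * p x) = 1 \<and>
      integrable lborel (\<lambda>x. \<bar>x\<bar> powr s * p x) \<and>
      (\<forall>x. \<bar>p x - std_normal_density x\<bar> \<le> 1/2)"
    and \<epsilon>: "\<epsilon> > 0"
  define m where "m = (LINT x|lborel. \<bar>x\<bar> powr s * p x)"
  define t where "t = sup_norm (\<lambda>x. p x - std_normal_density x)"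
  have close: "\<And>x. \<bar>p x - std_normal_density x\<bar> \<le> 1/2" using hyps by blast
  have t: "0 \<le> t" "t \<le> 1"
    using sup_norm_bounds(2,3)[where f="\<lambda>x. p x - std_normal_density x", OF close]
    unfolding t_def by simp_all
  have D: "D_gauss p \<le> 36 * m powr (2/s) * (sqrt \<bar>ln t\<bar> * t) powr (1 - 2/s)"
    unfolding m_def t_def using assms hyps by (intro D_gauss_le_sup_norm) auto
  have M: "(sqrt \<bar>ln t\<bar> * t) powr (1 - 2/s) \<le> M_eps \<epsilon> * t powr ((1 - 2/s) * (1 - \<epsilon>))"
    using assms by (intro sqrt_abs_ln_mult_powr_le \<epsilon> t) auto
  have "36 * m powr (2/s) * (sqrt \<bar>ln t\<bar> * t) powr (1 - 2/s)
      \<le> 36 * M_eps \<epsilon> * m powr (2/s) * t powr ((1 - 2/s) * (1 - \<epsilon>))"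
    using mult_left_mono[OF M, of "36 * m powr (2/s)"] by (simp add: ac_simps)
  with D show "let m = (LINT x|lborel. \<bar>x\<bar> powr s * p x);
            t = sup_norm (\<lambda>x. p x - std_normal_density x)
        in D_gauss p \<le> 36 * m powr (2/s) * (sqrt \<bar>ln t\<bar> * t) powr (1 - 2/s)
         \<and> 36 * m powr (2/s) * (sqrt \<bar>ln t\<bar> * t) powr (1 - 2/s)
             \<le> 36 * M_eps \<epsilon> * m powr (2/s) * t powr ((1 - 2/s) * (1 - \<epsilon>))"
    unfolding Let_def m_def t_def by blast
qed simp

end
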